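(* Let $\varphi:K\to L$ be a strong covering. Then for every $F\in S_n(K)$ and $G\in S_n(L)$ with $\varphi(F)=G$, $$\bigl|\{\bar F\in S_{n+1}(K): F\subset\bar F\}\bigr|=\bigl|\{\bar G\in S_{n+1}(L): G\subset\bar G\}\bigr|.$$
   Context: $S_j(K)$ denotes the set of $j$-dimensional faces of a simplicial complex $K$. A simplicial map $\varphi:K\to L$ is a vertex map sending simplices to simplices. $\varphi$ is a covering map if $K$ is connected and for every simplex $G$ of $L$, $\varphi^{-1}(G)$ is a union of pairwise disjoint simplices $F_i$ of $K$ with $\varphi|_{F_i}:F_i\to G$ bijective for each $i$. A covering map $\varphi$ is a strong covering if for every $G\in S_n(L)$ that is a facet of some $\bar G\in S_{n+1}(L)$ and every $F\in\varphi^{-1}(G)$ there exists $\bar F\in S_{n+1}(K)$ with $F\subset\bar F$ and $\varphi(\bar F)=\bar G$. *)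

theory Defs
  imports Main "HOL-Library.Equipollence"
begin

definition simplicial_complex :: "'a set set \<Rightarrow> bool" where
  "simplicial_complex K \<longleftrightarrow>
     (\<forall>F\<in>K. finite F \<and> F \<noteq> {}) \<and>
     (\<forall>F\<in>K. \<forall>H. H \<subseteq> F \<and> H \<noteq> {} \<longrightarrow> H \<in> K)"

definition faces_dim :: "nat \<Rightarrow> 'a set set \<Rightarrow> 'a set set" where
  "faces_dim j K = {F \<in> K. card F = j + 1}"

definition sc_connected :: "'a set set \<Rightarrow> bool" where
  "sc_connected K \<longleftrightarrow> K \<noteq> {} \<and>
     (\<forall>u\<in>\<Union>K. \<forall>v\<in>\<Union>K. (u, v) \<in> {(x, y). {x, y} \<in> K}\<^sup>*)"

definition simplicial_map :: "('a \<Rightarrow> 'b) \<Rightarrow> 'a set set \<Rightarrow> 'b set set \<Rightarrow> bool" where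
  "simplicial_map \<phi> K L \<longleftrightarrow> simplicial_complex K \<and> simplicial_complex L \<and>
     (\<forall>F\<in>K. \<phi> ` F \<in> L)"

text \<open>Covering map: the preimage subcomplex of every simplex \<open>G\<close> of \<open>L\<close>
  (all faces of \<open>K\<close> mapped into \<open>G\<close>) is a union of pairwise disjoint simplices
  \<open>F_i\<close> of \<open>K\<close> (with all their faces), each mapped bijectively onto \<open>G\<close>.\<close>
definition covering_map :: "('a \<Rightarrow> 'b) \<Rightarrow> 'a set set \<Rightarrow> 'b set set \<Rightarrow> bool" where
  "covering_map \<phi> K L \<longleftrightarrow> simplicial_map \<phi> K L \<and> sc_connected K \<and>
     (\<forall>G\<in>L. \<exists>\<F>. \<F> \<subseteq> K \<and> pairwise disjnt \<F> \<and>
        (\<forall>F\<in>\<F>. bij_betw \<phi> F G) \<and>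
        {H \<in> K. \<phi> ` H \<subseteq> G} = {H. H \<noteq> {} \<and> (\<exists>F\<in>\<F>. H \<subseteq> F)})"

definition strong_covering :: "('a \<Rightarrow> 'b) \<Rightarrow> 'a set set \<Rightarrow> 'b set set \<Rightarrow> bool" where
  "strong_covering \<phi> K L \<longleftrightarrow> covering_map \<phi> K L \<and>
     (\<forall>n. \<forall>G\<in>faces_dim n L. \<forall>Gb\<in>faces_dim (Suc n) L. G \<subseteq> Gb \<longrightarrow>
        (\<forall>F\<in>K. \<phi> ` F = G \<longrightarrow>
           (\<exists>Fb\<in>faces_dim (Suc n) K. F \<subseteq> Fb \<and> \<phi> ` Fb = Gb)))"

end

theory Submission
  imports Defs
begin

text \<open>The bijection is \<open>Fb \<mapsto> \<phi> ` Fb\<close>. Two faces sharing a vertex and having the same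
  image lie in one sheet over that image, on which \<phi> is injective; this gives injectivity
  of the map and shows that \<phi> preserves dimension. Surjectivity is the lifting property of
  a strong covering, the strictness of \<open>F \<subset> Fb\<close> being inherited from \<open>G \<subset> Gb\<close>.\<close>

lemma covering_map_inj_on_Un:
  assumes cov: "covering_map \<phi> K L" and G: "G \<in> L"
    and H: "H1 \<in> K" "H2 \<in> K" "\<phi> ` H1 \<subseteq> G" "\<phi> ` H2 \<subseteq> G" "H1 \<inter> H2 \<noteq> {}"
  shows "inj_on \<phi> (H1 \<union> H2)"
proof -
  obtain \<F> where sheets: "pairwise disjnt \<F>" "\<forall>F\<in>\<F>. bij_betw \<phi> F G"
    "{H \<in> K. \<phi> ` H \<subseteq> G} = {H. H \<noteq> {} \<and> (\<exists>F\<in>\<F>. H \<subseteq> F)}"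
    using cov G unfolding covering_map_def by blast
  have "H1 \<in> {H \<in> K. \<phi> ` H \<subseteq> G}" "H2 \<in> {H \<in> K. \<phi> ` H \<subseteq> G}" using H by auto
  then obtain F1 F2 where F12: "F1 \<in> \<F>" "H1 \<subseteq> F1" "F2 \<in> \<F>" "H2 \<subseteq> F2"
    using sheets(3) by auto
  have "F1 = F2"
    using F12 H(5) sheets(1) unfolding pairwise_def disjnt_def by blast
  then have "H1 \<union> H2 \<subseteq> F1" "inj_on \<phi> F1"
    using F12 sheets(2) by (auto simp: bij_betw_def)
  then show ?thesis by (rule inj_on_subset[rotated])
qed

lemma covering_map_inj_on_face:
  assumes cov: "covering_map \<phi> K L" and H: "H \<in> K"
  shows "inj_on \<phi> H"
proof (cases "H = {}")
  case False
  have "\<phi> ` H \<in> L" using cov H unfolding covering_map_def simplicial_map_def by blast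
  with covering_map_inj_on_Un[OF cov this H H] False show ?thesis by simp
qed simp

lemma covering_map_faces_dim_image:
  assumes cov: "covering_map \<phi> K L" and H: "H \<in> faces_dim n K"
  shows "\<phi> ` H \<in> faces_dim n L"
proof -
  have "H \<in> K" "card H = n + 1" using H unfolding faces_dim_def by auto
  moreover have "\<phi> ` H \<in> L" using cov \<open>H \<in> K\<close> unfolding covering_map_def simplicial_map_def by blast
  ultimately show ?thesis
    using covering_map_inj_on_face[OF cov] card_image unfolding faces_dim_def by fastforce
qed

lemma covering_map_inj_on_star:
  assumes cov: "covering_map \<phi> K L" and A: "A \<noteq> {}"
  shows "inj_on (image \<phi>) {X \<in> K. A \<subseteq> X}"
proof (rule inj_onI)
  fix X Y assume X: "X \<in> {X \<in> K. A \<subseteq> X}" and Y: "Y \<in> {X \<in> K. A \<subseteq> X}"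
    and eq: "\<phi> ` X = \<phi> ` Y"
  have "\<phi> ` X \<in> L" using cov X unfolding covering_map_def simplicial_map_def by blast
  moreover have "X \<inter> Y \<noteq> {}" using X Y A by blast
  ultimately have "inj_on \<phi> (X \<union> Y)"
    using covering_map_inj_on_Un[OF cov, of "\<phi> ` X" X Y] X Y eq by simp
  then show "X = Y" using eq inj_on_image_eq_iff by blast
qed

lemma strong_covering_lift_coface:
  assumes sc: "strong_covering \<phi> K L" and F: "F \<in> K" "\<phi> ` F = G"
    and G: "G \<in> faces_dim n L" and Gb: "Gb \<in> faces_dim (Suc n) L" "G \<subset> Gb"
  shows "\<exists>Fb\<in>faces_dim (Suc n) K. F \<subset> Fb \<and> \<phi> ` Fb = Gb"
proof -
  have lift: "\<forall>n. \<forall>G\<in>faces_dim n L. \<forall>Gb\<in>faces_dim (Suc n) L. G \<subseteq> Gb \<longrightarrow>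
      (\<forall>F\<in>K. \<phi> ` F = G \<longrightarrow> (\<exists>Fb\<in>faces_dim (Suc n) K. F \<subseteq> Fb \<and> \<phi> ` Fb = Gb))"
    using sc unfolding strong_covering_def by (rule conjunct2)
  obtain Fb where Fb: "Fb \<in> faces_dim (Suc n) K" "F \<subseteq> Fb" "\<phi> ` Fb = Gb"
    using lift[rule_format, OF G Gb(1) psubset_imp_subset[OF Gb(2)] F] by blast
  moreover have "F \<noteq> Fb" using Fb F Gb(2) by blast
  ultimately show ?thesis by blast
qed

theorem lemma3p3:
  fixes \<phi> :: "'a \<Rightarrow> 'b" and K :: "'a set set" and L :: "'b set set"
  assumes "strong_covering \<phi> K L"
    and "F \<in> faces_dim n K" and "G \<in> faces_dim n L" and "\<phi> ` F = G"
  shows "{Fb \<in> faces_dim (Suc n) K. F \<subset> Fb} \<approx> {Gb \<in> faces_dim (Suc n) L. G \<subset> Gb}"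
proof -
  have cov: "covering_map \<phi> K L" using assms(1) unfolding strong_covering_def by (rule conjunct1)
  have F: "F \<in> K" "F \<noteq> {}" and card_G: "card G = n + 1"
    using assms(2,3) unfolding faces_dim_def by auto
  have "inj_on (image \<phi>) {Fb \<in> faces_dim (Suc n) K. F \<subset> Fb}"
    using covering_map_inj_on_star[OF cov F(2)] by (rule inj_on_subset) (auto simp: faces_dim_def)
  moreover have "\<phi> ` Fb \<in> {Gb \<in> faces_dim (Suc n) L. G \<subset> Gb}"
    if Fb: "Fb \<in> faces_dim (Suc n) K" "F \<subset> Fb" for Fb
  proof -
    have dim: "\<phi> ` Fb \<in> faces_dim (Suc n) L" using cov Fb(1) by (rule covering_map_faces_dim_image)
    then have "G \<noteq> \<phi> ` Fb" using card_G unfolding faces_dim_def by auto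
    with dim Fb(2) assms(4) show ?thesis by blast
  qed
  moreover have "{Gb \<in> faces_dim (Suc n) L. G \<subset> Gb} \<subseteq> image \<phi> ` {Fb \<in> faces_dim (Suc n) K. F \<subset> Fb}"
    using strong_covering_lift_coface[OF assms(1) F(1) assms(4,3)] by blast
  ultimately show ?thesis unfolding eqpoll_def bij_betw_def by blast
qed

end
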